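(* Consider a connected one-dimensional network of $m$ springs on $n$ nodes with kinematic matrix $D$ and $q$ displacement-controlled loadings with incidence matrix $R$ satisfying $\mathrm{rank}(R^\top D)=q$. Assume $q=n-2$ and that no spring is blocked by the displacement-controlled loadings. Then for every $x\in U\setminus\{0\}$, where $U=\{x\in D\mathbb{R}^n:R^\top x=0\}$, one has $x_i\neq0$ for all $i\in\{1,\dots,m\}$.
   Context: Spring $k$ joins left node $i_k$ to right node $j_k\neq i_k$; the graph is connected; $D$ is the $m\times n$ matrix with $(D\xi)_k=\xi_{j_k}-\xi_{i_k}$. Displacement-controlled loading $k$ prescribes $\xi_{J_k}-\xi_{I_k}=l_k(t)$; $R^k\in\{-1,0,1\}^m$ is the signed incidence vector of a chain of springs from $I_k$ to $J_k$, so $(R^k)^\top D\xi=\xi_{J_k}-\xi_{I_k}$; $R=(R^1,\dots,R^q)$. A spring $i$ is blocked by the displacement-controlled loadings if the family of pairs $\{I_k,J_k\}$, $k=1,\dots,q$, contains a chain connecting one endpoint of spring $i$ with its other endpoint. *)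

theory Defs
  imports "HOL-Analysis.Analysis"
begin

text \<open>Nodes are the elements of a finite type 'n, springs of a finite type 'm,
  displacement-controlled loadings of a finite type 'q.  Spring k joins the
  left node a k to the right node b k.\<close>

definition spring_edges :: "('m \<Rightarrow> 'n) \<Rightarrow> ('m \<Rightarrow> 'n) \<Rightarrow> ('n \<times> 'n) set" where
  "spring_edges a b = {(a k, b k) | k. True}"

definition network_connected :: "('m \<Rightarrow> 'n) \<Rightarrow> ('m \<Rightarrow> 'n) \<Rightarrow> bool" where
  "network_connected a b \<longleftrightarrow>
     (\<forall>u v. (u, v) \<in> (spring_edges a b \<union> (spring_edges a b)\<inverse>)\<^sup>*)"

definition kin_matrix :: "('m \<Rightarrow> 'n) \<Rightarrow> ('m \<Rightarrow> 'n) \<Rightarrow> real^'n^'m" where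
  "kin_matrix a b = (\<chi> k v. (if v = b k then 1 else 0) - (if v = a k then 1 else 0))"

text \<open>r is the signed incidence vector of a chain (simple path) of springs from
  node I to node J: nodes vs!0 = I, ..., vs!L = J, spring ss!t joins vs!t and
  vs!(t+1); its entry is +1 if traversed from its left to its right node, -1 if
  traversed backwards, and springs not in the chain get 0.\<close>
definition chain_incidence ::
  "('m \<Rightarrow> 'n) \<Rightarrow> ('m \<Rightarrow> 'n) \<Rightarrow> 'n \<Rightarrow> 'n \<Rightarrow> real^'m \<Rightarrow> bool" where
  "chain_incidence a b I J r \<longleftrightarrow>
     (\<exists>vs ss. distinct vs \<and> length vs = Suc (length ss) \<and>
        hd vs = I \<and> last vs = J \<and>
        (\<forall>t < length ss. {a (ss ! t), b (ss ! t)} = {vs ! t, vs ! Suc t}) \<and>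
        (\<forall>s. r $ s = (\<Sum>t < length ss.
              if ss ! t = s then (if a s = vs ! t then 1 else -1) else 0)))"

definition loading_pairs :: "('q \<Rightarrow> 'n) \<Rightarrow> ('q \<Rightarrow> 'n) \<Rightarrow> ('n \<times> 'n) set" where
  "loading_pairs I J = {(I k, J k) | k. True}"

definition spring_blocked ::
  "('m \<Rightarrow> 'n) \<Rightarrow> ('m \<Rightarrow> 'n) \<Rightarrow> ('q \<Rightarrow> 'n) \<Rightarrow> ('q \<Rightarrow> 'n) \<Rightarrow> 'm \<Rightarrow> bool" where
  "spring_blocked a b I J s \<longleftrightarrow>
     (a s, b s) \<in> (loading_pairs I J \<union> (loading_pairs I J)\<inverse>)\<^sup>*"

end

theory Submission imports Defs begin

text \<open>Write \<open>M = R\<^sup>T D\<close>. Since each column of \<open>R\<close> is the incidence vector of a chain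
  from \<open>I k\<close> to \<open>J k\<close>, the sum along the chain telescopes and \<open>(M \<xi>)\<^sub>k = \<xi>\<^sub>J\<^sub>k - \<xi>\<^sub>I\<^sub>k\<close>;
  so the kernel of \<open>M\<close> consists of the node potentials that are constant on the classes
  of the equivalence generated by the loading pairs, and has dimension \<open>n - q = 2\<close>.
  If \<open>x = D \<xi> \<in> U\<close> vanished at spring \<open>i\<close>, then \<open>\<xi>\<close>, the constant potential and the
  indicator of the class of the left end of spring \<open>i\<close> would be three independent
  elements of this kernel: the indicator separates the two ends because spring \<open>i\<close> is
  not blocked, while \<open>\<xi>\<close> takes equal values there and is not constant because \<open>x \<noteq> 0\<close>.\<close>

lemma kin_matrix_apply: "(kin_matrix a b *v v) $ k = v $ b k - v $ a k"
proof -
  have "(\<Sum>j\<in>UNIV. (if j = c then 1 else 0) * v $ j) = v $ c" for c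
  proof -
    have "(\<Sum>j\<in>UNIV. (if j = c then 1 else 0) * v $ j) = (\<Sum>j\<in>UNIV. if j = c then v $ j else 0)"
      by (intro sum.cong refl) auto
    then show ?thesis by simp
  qed
  then show ?thesis
    by (simp add: kin_matrix_def matrix_vector_mult_def left_diff_distrib sum_subtractf)
qed

lemma chain_incidence_telescope:
  assumes ends: "\<And>k. a k \<noteq> b k" and chain: "chain_incidence a b I J r"
  shows "(\<Sum>s\<in>UNIV. r $ s * (v $ b s - v $ a s)) = v $ J - v $ I"
proof -
  obtain vs ss where vs: "distinct vs" "length vs = Suc (length ss)" "hd vs = I" "last vs = J"
    and steps: "\<forall>t < length ss. {a (ss ! t), b (ss ! t)} = {vs ! t, vs ! Suc t}"
    and r: "\<And>s. r $ s = (\<Sum>t < length ss.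
              if ss ! t = s then (if a s = vs ! t then 1 else -1) else 0)"
    using chain unfolding chain_incidence_def by blast
  define L where "L = length ss"
  define sg where "sg s t = (if a s = vs ! t then 1 else -1::real)" for s t
  have "(\<Sum>s\<in>UNIV. r $ s * (v $ b s - v $ a s))
      = (\<Sum>s\<in>UNIV. \<Sum>t<L. if ss ! t = s then sg s t * (v $ b s - v $ a s) else 0)"
  proof (intro sum.cong refl)
    fix s
    show "r $ s * (v $ b s - v $ a s)
        = (\<Sum>t<L. if ss ! t = s then sg s t * (v $ b s - v $ a s) else 0)"
      unfolding L_def r sum_distrib_right by (intro sum.cong refl) (auto simp: sg_def)
  qed
  also have "\<dots> = (\<Sum>t<L. \<Sum>s\<in>UNIV. if ss ! t = s then sg s t * (v $ b s - v $ a s) else 0)"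
    by (rule sum.swap)
  also have "\<dots> = (\<Sum>t<L. sg (ss ! t) t * (v $ b (ss ! t) - v $ a (ss ! t)))"
    by simp
  also have "\<dots> = (\<Sum>t<L. v $ (vs ! Suc t) - v $ (vs ! t))"
  proof (rule sum.cong[OF refl])
    fix t assume "t \<in> {..<L}"
    then have step: "{a (ss ! t), b (ss ! t)} = {vs ! t, vs ! Suc t}"
      using steps L_def by auto
    moreover have "a (ss ! t) \<noteq> b (ss ! t)" using ends by blast
    ultimately show "sg (ss ! t) t * (v $ b (ss ! t) - v $ a (ss ! t)) = v $ (vs ! Suc t) - v $ (vs ! t)"
      unfolding sg_def by (cases "a (ss ! t) = vs ! t") (auto simp: doubleton_eq_iff)
  qed
  also have "\<dots> = v $ (vs ! L) - v $ (vs ! 0)"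
    by (rule sum_lessThan_telescope)
  also have "vs ! L = J" using vs L_def by (metis diff_Suc_1 last_conv_nth list.size(3) nat.distinct(1))
  also have "vs ! 0 = I" using vs by (metis hd_conv_nth list.size(3) nat.distinct(1))
  finally show ?thesis .
qed

lemma loading_kin_matrix_apply:
  fixes R :: "real^'q::finite^'m::finite"
  assumes ends: "\<And>k. a k \<noteq> b k"
    and chains: "\<And>k. chain_incidence a b (I k) (J k) (column k R)"
  shows "((transpose R ** kin_matrix a b) *v v) $ k = v $ J k - v $ I k"
proof -
  have "((transpose R ** kin_matrix a b) *v v) $ k = (transpose R *v (kin_matrix a b *v v)) $ k"
    by (simp add: matrix_vector_mul_assoc)
  also have "\<dots> = (\<Sum>s\<in>UNIV. column k R $ s * (kin_matrix a b *v v) $ s)"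
    by (simp add: matrix_vector_mult_def transpose_def column_def)
  also have "\<dots> = (\<Sum>s\<in>UNIV. column k R $ s * (v $ b s - v $ a s))"
    by (simp only: kin_matrix_apply)
  also have "\<dots> = v $ J k - v $ I k"
    by (rule chain_incidence_telescope[OF ends chains])
  finally show ?thesis .
qed

lemma rank_add_card_independent_kernel_le:
  fixes M :: "real^'n::finite^'q::finite"
  assumes ker: "U \<subseteq> {v. M *v v = 0}" and indep: "independent U"
  shows "rank M + card U \<le> CARD('n)"
proof -
  define f where "f = (\<lambda>v. M *v v)"
  have lin: "linear f" unfolding f_def by (rule matrix_vector_mul_linear)
  obtain B where B: "U \<subseteq> B" "independent B" "UNIV \<subseteq> span B"
    by (rule maximal_independent_subset_extend[OF subset_UNIV indep]) blast
  have finB: "finite B" using B(2) by (rule finiteI_independent)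
  have cardB: "card B = CARD('n)"
    using basis_card_eq_dim[of B UNIV] B by simp
  have finU: "finite U" using finB B(1) finite_subset by blast
  have "rank M = dim (range f)" unfolding f_def by (rule rank_dim_range)
  also have "range f = span (f ` B)"
    using B(3) span_linear_image[OF lin, of B] by (metis top.extremum_unique)
  also have "dim (span (f ` B)) = dim (f ` B)" by (rule dim_span)
  also have "\<dots> \<le> dim (insert 0 (f ` (B - U)))"
    using ker unfolding f_def by (intro dim_subset) auto
  also have "\<dots> = dim (f ` (B - U))"
    by (metis dim_span span_insert_0)
  also have "\<dots> \<le> card (f ` (B - U))"
    using finB by (intro dim_le_card span_superset finite_imageI finite_Diff)
  also have "\<dots> \<le> card (B - U)" using finB by (simp add: card_image_le)
  also have "\<dots> = card B - card U" using B(1) finU by (simp add: card_Diff_subset)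
  finally show ?thesis
    using card_mono[OF finB B(1)] cardB by linarith
qed

lemma independent_nonconstant_const_separating:
  fixes \<xi> c :: "real^'n::finite"
  assumes c: "c $ p = 1" "c $ q = 0" and \<xi>: "\<xi> $ p = \<xi> $ q" "\<xi> $ u \<noteq> \<xi> $ w"
  shows "independent {\<xi>, \<chi> _. 1, c}" and "card {\<xi>, \<chi> _. 1, c} = 3"
proof -
  define one :: "real^'n" where "one = (\<chi> _. 1)"
  have one_notin: "one \<notin> span {c}"
  proof
    assume "one \<in> span {c}"
    then obtain t where "one = t *\<^sub>R c" by (auto simp: span_singleton)
    then have "one $ q = t * c $ q" by simp
    then show False using c by (simp add: one_def)
  qed
  have \<xi>_notin: "\<xi> \<notin> span {one, c}"
  proof
    assume "\<xi> \<in> span {one, c}"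
    then obtain \<alpha> \<beta> where e: "\<xi> - \<alpha> *\<^sub>R one = \<beta> *\<^sub>R c"
      by (auto simp: span_insert span_singleton)
    have "\<xi> $ p - \<alpha> = \<beta>" "\<xi> $ q - \<alpha> = 0"
      using arg_cong[OF e, of "\<lambda>v. v $ p"] arg_cong[OF e, of "\<lambda>v. v $ q"] c
      by (simp_all add: one_def)
    then have "\<xi> = \<alpha> *\<^sub>R one" using e \<xi>(1) by simp
    then show False using \<xi>(2) by (simp add: one_def)
  qed
  have distinct: "\<xi> \<noteq> one" "\<xi> \<noteq> c" "one \<noteq> c"
    using \<xi>_notin one_notin by (metis insert_iff span_base)+
  have "c \<noteq> 0" using c by auto
  then have "independent {one, c}"
    using one_notin distinct(3) by (simp add: independent_insert)
  then show "independent {\<xi>, \<chi> _. 1, c}"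
    using \<xi>_notin distinct(1,2) by (simp add: independent_insert one_def)
  show "card {\<xi>, \<chi> _. 1, c} = 3" using distinct by (simp add: one_def)
qed

theorem lemma2:
  fixes a b :: "'m::finite \<Rightarrow> 'n::finite"
    and I J :: "'q::finite \<Rightarrow> 'n"
    and R :: "real^'q^'m"
  assumes ends: "\<And>k. a k \<noteq> b k"
    and conn: "network_connected a b"
    and Rchain: "\<And>k. chain_incidence a b (I k) (J k) (column k R)"
    and rk: "rank (transpose R ** kin_matrix a b) = CARD('q)"
    and q: "CARD('q) = CARD('n) - 2"
    and unblocked: "\<And>s. \<not> spring_blocked a b I J s"
    and x: "x \<in> {y \<in> range (\<lambda>\<xi>. kin_matrix a b *v \<xi>). transpose R *v y = 0}"
    and nz: "x \<noteq> 0"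
  shows "\<forall>i. x $ i \<noteq> 0"
proof (rule ccontr)
  assume "\<not> (\<forall>i. x $ i \<noteq> 0)"
  then obtain i where xi: "x $ i = 0" by blast
  define M where "M = transpose R ** kin_matrix a b"
  have kernel_iff: "M *v v = 0 \<longleftrightarrow> (\<forall>k. v $ I k = v $ J k)" for v
    by (auto simp: vec_eq_iff M_def loading_kin_matrix_apply[OF ends Rchain])
  obtain \<xi> where x_eq: "x = kin_matrix a b *v \<xi>" and "transpose R *v x = 0" using x by auto
  then have \<xi>_ker: "M *v \<xi> = 0" by (simp add: M_def matrix_vector_mul_assoc)
  have x_apply: "x $ k = \<xi> $ b k - \<xi> $ a k" for k by (simp add: x_eq kin_matrix_apply)
  obtain k where "x $ k \<noteq> 0" using nz by (auto simp: vec_eq_iff)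
  then have \<xi>_nonconst: "\<xi> $ a k \<noteq> \<xi> $ b k" using x_apply by simp
  define E where "E = loading_pairs I J \<union> (loading_pairs I J)\<inverse>"
  define c :: "real^'n" where "c = (\<chi> w. if (a i, w) \<in> E\<^sup>* then 1 else 0)"
  have "(I k, J k) \<in> E" "(J k, I k) \<in> E" for k unfolding E_def loading_pairs_def by auto
  then have "(a i, I k) \<in> E\<^sup>* \<longleftrightarrow> (a i, J k) \<in> E\<^sup>*" for k
    using rtrancl_into_rtrancl by metis
  then have c_ker: "M *v c = 0" by (simp add: kernel_iff c_def)
  have c_ends: "c $ a i = 1" "c $ b i = 0"
    using unblocked[of i] by (simp_all add: c_def E_def spring_blocked_def)
  have \<xi>_ends: "\<xi> $ a i = \<xi> $ b i" using xi x_apply[of i] by simp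
  have "{\<xi>, \<chi> _. 1, c} \<subseteq> {v. M *v v = 0}" using \<xi>_ker c_ker kernel_iff by auto
  from rank_add_card_independent_kernel_le[OF this]
    independent_nonconstant_const_separating[OF c_ends \<xi>_ends \<xi>_nonconst]
  have "rank M + 3 \<le> CARD('n)" by simp
  then show False using rk q unfolding M_def by linarith
qed

end
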